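(* The static quadratic game in which each player $n=1,\ldots,N$ solves \[ \min_{\delta u_{n,:}} \; J_n(\bar u) + \frac{\partial J_n(\bar u)}{\partial u}\,\delta u + \frac{1}{2}\,\delta u^\top \frac{\partial^2 J_n(\bar u)}{\partial u^2}\,\delta u \] (whose stacked first-order conditions are exactly the Newton step $\frac{\partial \mathcal{J}(\bar u)}{\partial u}\delta u = -\mathcal{J}(\bar u)$) is equivalent to the dynamic game in which each player $n$ solves \[ \min_{\delta u_{n,:}} \; \frac{1}{2}\sum_{k=0}^T\left(\begin{bmatrix}1\\ \delta x_k\\ \delta u_{:,k}\end{bmatrix}^\top M_{n,k}\begin{bmatrix}1\\ \delta x_k\\ \delta u_{:,k}\end{bmatrix} + M^{1x}_{n,k}\,\Delta x_k\right) \] subject to $\delta x_0=0$, $\Delta x_0=0$, $\delta x_{k+1}=A_k\delta x_k + B_k\delta u_{:,k}$, $\Delta x_{k+1} = A_k\Delta x_k + R_k(\delta x_k,\delta u_{:,k})$, $k=0,1,\ldots,T$.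
   Context: Consider a deterministic finite-horizon dynamic game with $N$ players: state $x_k\in\mathbb{R}^{n_x}$, joint input $u_{:,k}=[u_{1,k}^\top,\ldots,u_{N,k}^\top]^\top$, dynamics $x_{k+1}=f_k(x_k,u_{:,k})$ with $x_0$ fixed, and player costs $J_n(u)=\sum_{k=0}^T c_{n,k}(x_k,u_{:,k})$, where $u$ stacks all inputs over all times and $u_{n,:}$ denotes player $n$'s inputs over all times. $\mathcal{J}(u)$ stacks the gradients $\partial J_n/\partial u_{n,:}$, $n=1,\ldots,N$. Let $(\bar x,\bar u)$ be a nominal trajectory satisfying the dynamics, $\delta u = u-\bar u$. Define, evaluated at $(\bar x,\bar u)$: $A_k=\partial f_k/\partial x_k$, $B_k=\partial f_k/\partial u_{:,k}$; $G_k^l$ the Hessian of the $l$-th component $f_k^l$ with respect to $(x_k,u_{:,k})$; $R_k(\delta x_k,\delta u_{:,k})$ the vector whose $l$-th entry is $[\delta x_k;\delta u_{:,k}]^\top G_k^l[\delta x_k;\delta u_{:,k}]$; and \[ M_{n,k}=\begin{bmatrix} 2c_{n,k} & \partial c_{n,k}/\partial x_k & \partial c_{n,k}/\partial u_{:,k}\\ (\partial c_{n,k}/\partial x_k)^\top & \partial^2 c_{n,k}/\partial x_k^2 & \partial^2 c_{n,k}/\partial x_k\partial u_{:,k}\\ (\partial c_{n,k}/\partial u_{:,k})^\top & \partial^2 c_{n,k}/\partial u_{:,k}\partial x_k & \partial^2 c_{n,k}/\partial u_{:,k}^2\end{bmatrix}, \] with block $M^{1x}_{n,k}=\partial c_{n,k}/\partial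 x_k$. The game states satisfy $\delta x_k=\sum_i \frac{\partial x_k}{\partial u_{:,i}}\delta u_{:,i}$ and $\Delta x_k^l=\sum_{i,j}\delta u_{:,i}^\top \frac{\partial^2 x_k^l}{\partial u_{:,i}\partial u_{:,j}}\delta u_{:,j}$. *)

theory Defs
  imports "HOL-Analysis.Analysis"
begin

text \<open>The full input trajectory u
  (all players, all times) is an element of the Euclidean space real^'nu^'t,
  where the finite type 't indexes the T+1 time steps through a bijection
  tm : {0..T} -> 't, so u_{:,k} = u $ tm k.  Each coordinate i of the joint input is owned by one
  player own i.\<close>

fun traj :: "(nat \<Rightarrow> ('x \<times> 'u) \<Rightarrow> 'x) \<Rightarrow> 'x \<Rightarrow> (nat \<Rightarrow> 'u) \<Rightarrow> nat \<Rightarrow> 'x" where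
  "traj f x0 u 0 = x0"
| "traj f x0 u (Suc k) = f k (traj f x0 u k, u k)"

definition game_cost ::
  "(nat \<Rightarrow> nat \<Rightarrow> ((real^'nx) \<times> (real^'nu)) \<Rightarrow> real) \<Rightarrow> (nat \<Rightarrow> ((real^'nx) \<times> (real^'nu)) \<Rightarrow> real^'nx)
   \<Rightarrow> real^'nx \<Rightarrow> nat \<Rightarrow> (nat \<Rightarrow> 't) \<Rightarrow> nat \<Rightarrow> real^'nu^'t \<Rightarrow> real" where
  "game_cost c f x0 T tm n u = (\<Sum>k\<le>T. c n k (traj f x0 (\<lambda>j. u $ tm j) k, u $ tm k))"

text \<open>First-order state variation: dx_0 = 0, dx_{k+1} = A_k dx_k + B_k du_k,
  where L k is the Jacobian of f_k at the nominal point, so that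
  A_k v = L k (v, 0) and B_k w = L k (0, w).\<close>
fun dx_traj :: "(nat \<Rightarrow> ('x::real_vector \<times> 'u::real_vector) \<Rightarrow> 'x) \<Rightarrow> (nat \<Rightarrow> 'u) \<Rightarrow> nat \<Rightarrow> 'x" where
  "dx_traj L du 0 = 0"
| "dx_traj L du (Suc k) = L k (dx_traj L du k, 0) + L k (0, du k)"

text \<open>Second-order state variation: Dx_0 = 0,
  Dx_{k+1} = A_k Dx_k + R_k(dx_k, du_k), where R k v is the vector whose l-th
  entry is v^T G_k^l v (Q k = second derivative of f_k at the nominal point,
  R_k(v) = Q k v v).\<close>
fun Dx_traj :: "(nat \<Rightarrow> ('x::real_vector \<times> 'u::real_vector) \<Rightarrow> 'x)
     \<Rightarrow> (nat \<Rightarrow> ('x \<times> 'u) \<Rightarrow> ('x \<times> 'u) \<Rightarrow> 'x) \<Rightarrow> (nat \<Rightarrow> 'u) \<Rightarrow> nat \<Rightarrow> 'x" where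
  "Dx_traj L Q du 0 = 0"
| "Dx_traj L Q du (Suc k) = L k (Dx_traj L Q du k, 0) + Q k (dx_traj L du k, du k) (dx_traj L du k, du k)"

text \<open>The quadratic form [1; dx; du]^T M [1; dx; du] written out blockwise, where
  c0 = c_{n,k}, D = derivative of c_{n,k} (so dc/dx v = D (v,0), dc/du w = D (0,w))
  and H = second derivative of c_{n,k} (Hessian blocks H (a,0) (b,0) etc.).\<close>
definition M_quad :: "real \<Rightarrow> (('x::real_vector \<times> 'u::real_vector) \<Rightarrow> real)
     \<Rightarrow> (('x \<times> 'u) \<Rightarrow> ('x \<times> 'u) \<Rightarrow> real) \<Rightarrow> 'x \<Rightarrow> 'u \<Rightarrow> real" where
  "M_quad c0 D H dx du =
     2 * c0 + D (dx, 0) + D (0, du) + D (dx, 0) + D (0, du)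
     + H (dx, 0) (dx, 0) + H (dx, 0) (0, du) + H (0, du) (dx, 0) + H (0, du) (0, du)"

definition nash_eq :: "nat \<Rightarrow> ('i \<Rightarrow> nat) \<Rightarrow> (nat \<Rightarrow> real^'i^'t \<Rightarrow> real) \<Rightarrow> real^'i^'t \<Rightarrow> bool" where
  "nash_eq N own \<Phi> v \<longleftrightarrow>
     (\<forall>n\<in>{1..N}. \<forall>w. (\<forall>t i. own i \<noteq> n \<longrightarrow> w $ t $ i = v $ t $ i) \<longrightarrow> \<Phi> n v \<le> \<Phi> n w)"

end

theory Submission
  imports Defs
begin

text \<open>The static game is the second-order Taylor model of the costs J_n at ubar, so it
  suffices to compute the first two derivatives of J_n(u) = \<Sum>_k c_{n,k}(x_k(u), u_k) by the
  chain rule.  The derivative of x_k(u) in direction h is the first variation \<delta>x_k.  Since the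
  coefficients A_k, B_k of the \<delta>x recursion depend on u through the nominal trajectory,
  differentiating \<delta>x_k once more in direction v gives a bilinear second variation, whose
  diagonal is \<Delta>x_k.  Hence
  D2J(\<delta>u)(\<delta>u) = \<Sum>_k c''(\<delta>x_k,\<delta>u_k)(\<delta>x_k,\<delta>u_k) + c'(\<Delta>x_k, 0), and collecting the constant,
  linear and quadratic terms into the form M_{n,k} yields the dynamic cost.  The two games have
  literally the same costs, hence the same Nash equilibria.\<close>

fun dx2_traj :: "(nat \<Rightarrow> ('x::real_vector \<times> 'u::real_vector) \<Rightarrow> 'x)
     \<Rightarrow> (nat \<Rightarrow> ('x \<times> 'u) \<Rightarrow> ('x \<times> 'u) \<Rightarrow> 'x) \<Rightarrow> (nat \<Rightarrow> 'u) \<Rightarrow> (nat \<Rightarrow> 'u) \<Rightarrow> nat \<Rightarrow> 'x" where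
  "dx2_traj L Q h v 0 = 0"
| "dx2_traj L Q h v (Suc k) = L k (dx2_traj L Q h v k, 0) + Q k (dx_traj L v k, v k) (dx_traj L h k, h k)"

abbreviation traj_point :: "(nat \<Rightarrow> ('x \<times> 'u) \<Rightarrow> 'x) \<Rightarrow> 'x \<Rightarrow> (nat \<Rightarrow> 'u) \<Rightarrow> nat \<Rightarrow> 'x \<times> 'u" where
  "traj_point f x0 u k \<equiv> (traj f x0 u k, u k)"

abbreviation traj_jacobian :: "(nat \<Rightarrow> ('x \<times> 'u) \<Rightarrow> ('x \<times> 'u) \<Rightarrow>\<^sub>L 'x::real_normed_vector)
    \<Rightarrow> (nat \<Rightarrow> ('x \<times> 'u::real_normed_vector) \<Rightarrow> 'x) \<Rightarrow> 'x \<Rightarrow> (nat \<Rightarrow> 'u) \<Rightarrow> nat \<Rightarrow> ('x \<times> 'u) \<Rightarrow> 'x" where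
  "traj_jacobian f' f x0 u \<equiv> \<lambda>k. blinfun_apply (f' k (traj_point f x0 u k))"

lemma dx2_traj_diag: "dx2_traj L Q h h k = Dx_traj L Q h k"
  by (induction k) auto

lemma blinfun_apply_Pair_split:
  "blinfun_apply B (a, 0) + blinfun_apply B (0, b) = blinfun_apply B (a, b)"
proof -
  have "(a, b) = (a, 0) + (0, b)"
    by simp
  then show ?thesis
    by (metis blinfun.add_right)
qed

lemma M_quad_blinfun:
  assumes "bounded_linear H"
  shows "M_quad c0 (blinfun_apply D) (\<lambda>v w. blinfun_apply (H v) w) a b
    = 2 * c0 + 2 * blinfun_apply D (a, b) + blinfun_apply (H (a, b)) (a, b)"
proof -
  interpret H: bounded_linear H by fact
  have "H (a, b) = H ((a, 0) + (0, b))"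
    by simp
  also have "\<dots> = H (a, 0) + H (0, b)"
    by (rule H.add)
  finally have "blinfun_apply (H (a, b)) (a, b)
      = blinfun_apply (H (a, 0)) (a, 0) + blinfun_apply (H (a, 0)) (0, b)
        + blinfun_apply (H (0, b)) (a, 0) + blinfun_apply (H (0, b)) (0, b)"
    by (simp add: blinfun.add_left blinfun_apply_Pair_split)
  moreover have "blinfun_apply D (a, b) = blinfun_apply D (a, 0) + blinfun_apply D (0, b)"
    by (simp add: blinfun_apply_Pair_split)
  ultimately show ?thesis
    unfolding M_quad_def by simp
qed

lemma has_derivative_traj_point:
  fixes f :: "nat \<Rightarrow> ('x::real_normed_vector \<times> 'u::real_normed_vector) \<Rightarrow> 'x"
    and U :: "'a::real_normed_vector \<Rightarrow> nat \<Rightarrow> 'u"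
  assumes U: "\<And>j. bounded_linear (\<lambda>u. U u j)"
    and f: "\<And>j p. j < k \<Longrightarrow> (f j has_derivative blinfun_apply (f' j p)) (at p)"
  shows "((\<lambda>u. traj_point f x0 (U u) k) has_derivative
    (\<lambda>h. (dx_traj (traj_jacobian f' f x0 (U u)) (U h) k, U h k))) (at u)"
  using f
proof (induction k)
  case 0
  show ?case
    unfolding traj.simps dx_traj.simps
    by (rule has_derivative_Pair[OF has_derivative_const bounded_linear_imp_has_derivative[OF U]])
next
  case (Suc k)
  have f_k: "\<And>j p. j < k \<Longrightarrow> (f j has_derivative blinfun_apply (f' j p)) (at p)"
    using Suc.prems less_SucI by blast
  have state: "((\<lambda>u. f k (traj_point f x0 (U u) k)) has_derivative
      (\<lambda>h. blinfun_apply (f' k (traj_point f x0 (U u) k)) (dx_traj (traj_jacobian f' f x0 (U u)) (U h) k, U h k))) (at u)"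
    by (rule has_derivative_compose[OF Suc.IH[OF f_k] Suc.prems]) simp_all
  have dx_step: "dx_traj (traj_jacobian f' f x0 (U u)) (U h) (Suc k)
      = blinfun_apply (f' k (traj_point f x0 (U u) k)) (dx_traj (traj_jacobian f' f x0 (U u)) (U h) k, U h k)" for h
    by (simp only: dx_traj.simps blinfun_apply_Pair_split)
  show ?case
    unfolding traj.simps dx_step
    by (rule has_derivative_Pair[OF state bounded_linear_imp_has_derivative[OF U]])
qed

lemma has_derivative_dx_traj:
  fixes f :: "nat \<Rightarrow> ('x::real_normed_vector \<times> 'u::real_normed_vector) \<Rightarrow> 'x"
    and U :: "'a::real_normed_vector \<Rightarrow> nat \<Rightarrow> 'u"
  assumes U: "\<And>j. bounded_linear (\<lambda>u. U u j)"
    and f: "\<And>j p. j < k \<Longrightarrow> (f j has_derivative blinfun_apply (f' j p)) (at p)"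
    and f2: "\<And>j. j < k \<Longrightarrow> (f' j has_derivative f2 j) (at (traj_point f x0 (U ubar) j))"
  shows "((\<lambda>u. dx_traj (traj_jacobian f' f x0 (U u)) (U h) k) has_derivative
    (\<lambda>v. dx2_traj (traj_jacobian f' f x0 (U ubar))
                   (\<lambda>j v w. blinfun_apply (f2 j v) w) (U h) (U v) k)) (at ubar)"
  using f f2
proof (induction k)
  case 0
  show ?case
    unfolding dx_traj.simps dx2_traj.simps by (rule has_derivative_const)
next
  case (Suc k)
  have f_k: "\<And>j p. j < k \<Longrightarrow> (f j has_derivative blinfun_apply (f' j p)) (at p)"
    and f2_k: "\<And>j. j < k \<Longrightarrow> (f' j has_derivative f2 j) (at (traj_point f x0 (U ubar) j))"
    using Suc.prems less_SucI by blast+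
  have jacobian: "((\<lambda>u. f' k (traj_point f x0 (U u) k)) has_derivative
      (\<lambda>v. f2 k (dx_traj (traj_jacobian f' f x0 (U ubar)) (U v) k, U v k))) (at ubar)"
    by (rule has_derivative_compose[OF has_derivative_traj_point[OF U f_k] Suc.prems(2)]) simp_all
  have pair: "((\<lambda>u. (dx_traj (traj_jacobian f' f x0 (U u)) (U h) k, U h k)) has_derivative
      (\<lambda>v. (dx2_traj (traj_jacobian f' f x0 (U ubar)) (\<lambda>j v w. blinfun_apply (f2 j v) w) (U h) (U v) k, 0))) (at ubar)"
    by (rule has_derivative_Pair[OF Suc.IH[OF f_k f2_k] has_derivative_const])
  have dx_step: "dx_traj (traj_jacobian f' f x0 (U u)) (U h) (Suc k)
      = blinfun_apply (f' k (traj_point f x0 (U u) k)) (dx_traj (traj_jacobian f' f x0 (U u)) (U h) k, U h k)" for u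
    by (simp only: dx_traj.simps blinfun_apply_Pair_split)
  show ?case
    unfolding dx_step dx2_traj.simps by (rule blinfun.FDERIV[OF jacobian pair])
qed

lemma has_derivative_cost_along_traj:
  fixes f :: "nat \<Rightarrow> ('x::real_normed_vector \<times> 'u::real_normed_vector) \<Rightarrow> 'x"
    and U :: "'a::real_normed_vector \<Rightarrow> nat \<Rightarrow> 'u"
    and g :: "nat \<Rightarrow> ('x \<times> 'u) \<Rightarrow> 'b::real_normed_vector"
  assumes U: "\<And>j. bounded_linear (\<lambda>u. U u j)"
    and f: "\<And>j p. j < T \<Longrightarrow> (f j has_derivative blinfun_apply (f' j p)) (at p)"
    and g: "\<And>k p. k \<le> T \<Longrightarrow> (g k has_derivative blinfun_apply (g' k p)) (at p)"
  shows "((\<lambda>u. \<Sum>k\<le>T. g k (traj_point f x0 (U u) k)) has_derivative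
    (\<lambda>h. \<Sum>k\<le>T. blinfun_apply (g' k (traj_point f x0 (U u) k))
      (dx_traj (traj_jacobian f' f x0 (U u)) (U h) k, U h k))) (at u)"
  using f by (intro has_derivative_sum has_derivative_compose[OF has_derivative_traj_point[OF U] g]) auto

lemma has_derivative_cost_gradient_along_traj:
  fixes f :: "nat \<Rightarrow> ('x::real_normed_vector \<times> 'u::real_normed_vector) \<Rightarrow> 'x"
    and U :: "'a::real_normed_vector \<Rightarrow> nat \<Rightarrow> 'u"
    and g' :: "nat \<Rightarrow> ('x \<times> 'u) \<Rightarrow> ('x \<times> 'u) \<Rightarrow>\<^sub>L 'b::real_normed_vector"
  assumes U: "\<And>j. bounded_linear (\<lambda>u. U u j)"
    and f: "\<And>j p. j < T \<Longrightarrow> (f j has_derivative blinfun_apply (f' j p)) (at p)"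
    and f2: "\<And>j. j < T \<Longrightarrow> (f' j has_derivative f2 j) (at (traj_point f x0 (U ubar) j))"
    and g2: "\<And>k. k \<le> T \<Longrightarrow> (g' k has_derivative g2 k) (at (traj_point f x0 (U ubar) k))"
  shows "((\<lambda>u. \<Sum>k\<le>T. blinfun_apply (g' k (traj_point f x0 (U u) k))
      (dx_traj (traj_jacobian f' f x0 (U u)) (U h) k, U h k)) has_derivative
    (\<lambda>v. \<Sum>k\<le>T.
      blinfun_apply (g' k (traj_point f x0 (U ubar) k))
        (dx2_traj (traj_jacobian f' f x0 (U ubar))
                  (\<lambda>j v w. blinfun_apply (f2 j v) w) (U h) (U v) k, 0)
      + blinfun_apply (g2 k (dx_traj (traj_jacobian f' f x0 (U ubar)) (U v) k, U v k))
          (dx_traj (traj_jacobian f' f x0 (U ubar)) (U h) k, U h k))) (at ubar)"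
proof -
  have gradient: "((\<lambda>u. g' k (traj_point f x0 (U u) k)) has_derivative
      (\<lambda>v. g2 k (dx_traj (traj_jacobian f' f x0 (U ubar)) (U v) k, U v k))) (at ubar)"
    if "k \<le> T" for k
    using that f by (intro has_derivative_compose[OF has_derivative_traj_point[OF U] g2]) auto
  have direction: "((\<lambda>u. (dx_traj (traj_jacobian f' f x0 (U u)) (U h) k, U h k)) has_derivative
      (\<lambda>v. (dx2_traj (traj_jacobian f' f x0 (U ubar))
                    (\<lambda>j v w. blinfun_apply (f2 j v) w) (U h) (U v) k, 0))) (at ubar)"
    if "k \<le> T" for k
    using that f f2 by (intro has_derivative_Pair has_derivative_dx_traj[OF U] has_derivative_const) auto
  show ?thesis
    by (intro has_derivative_sum blinfun.FDERIV gradient direction) auto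
qed

lemma cost_taylor_model_eq_M_quad_sum:
  fixes f :: "nat \<Rightarrow> ('x::real_normed_vector \<times> 'u::real_normed_vector) \<Rightarrow> 'x"
    and U :: "'a::real_normed_vector \<Rightarrow> nat \<Rightarrow> 'u"
    and g :: "nat \<Rightarrow> ('x \<times> 'u) \<Rightarrow> real"
    and J :: "'a \<Rightarrow> real"
  assumes U: "\<And>j. bounded_linear (\<lambda>u. U u j)"
    and f: "\<And>j p. j < T \<Longrightarrow> (f j has_derivative blinfun_apply (f' j p)) (at p)"
    and f2: "\<And>j. j < T \<Longrightarrow> (f' j has_derivative f2 j) (at (traj_point f x0 (U ubar) j))"
    and g: "\<And>k p. k \<le> T \<Longrightarrow> (g k has_derivative blinfun_apply (g' k p)) (at p)"
    and g2: "\<And>k. k \<le> T \<Longrightarrow> (g' k has_derivative g2 k) (at (traj_point f x0 (U ubar) k))"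
    and J_def: "\<And>u. J u = (\<Sum>k\<le>T. g k (traj_point f x0 (U u) k))"
    and J: "\<And>u. (J has_derivative blinfun_apply (DJ u)) (at u)"
    and DJ: "(DJ has_derivative D2J) (at ubar)"
  shows "J ubar + blinfun_apply (DJ ubar) h + 1/2 * blinfun_apply (D2J h) h
    = 1/2 * (\<Sum>k\<le>T.
        M_quad (g k (traj_point f x0 (U ubar) k)) (blinfun_apply (g' k (traj_point f x0 (U ubar) k)))
               (\<lambda>v w. blinfun_apply (g2 k v) w) (dx_traj (traj_jacobian f' f x0 (U ubar)) (U h) k) (U h k)
        + blinfun_apply (g' k (traj_point f x0 (U ubar) k))
            (Dx_traj (traj_jacobian f' f x0 (U ubar)) (\<lambda>j v w. blinfun_apply (f2 j v) w) (U h) k, 0))"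
    (is "_ = ?dynamic")
proof -
  let ?p = "traj_point f x0 (U ubar)"
  let ?L = "traj_jacobian f' f x0 (U ubar)"
  let ?Q = "\<lambda>j v w. blinfun_apply (f2 j v) w"
  let ?dx = "\<lambda>k. (dx_traj ?L (U h) k, U h k)"
  have J_eq: "J = (\<lambda>u. \<Sum>k\<le>T. g k (traj_point f x0 (U u) k))"
    using J_def by (rule ext)
  have DJ_eq: "blinfun_apply (DJ u) = (\<lambda>w. \<Sum>k\<le>T. blinfun_apply (g' k (traj_point f x0 (U u) k))
      (dx_traj (traj_jacobian f' f x0 (U u)) (U w) k, U w k))" for u
    by (rule has_derivative_unique[OF J[unfolded J_eq] has_derivative_cost_along_traj[OF U f g]])
  have "((\<lambda>u. blinfun_apply (DJ u) h) has_derivative (\<lambda>v. blinfun_apply (D2J v) h)) (at ubar)"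
    using blinfun.FDERIV[OF DJ has_derivative_const[of h]] by simp
  then have "(\<lambda>v. blinfun_apply (D2J v) h) = (\<lambda>v. \<Sum>k\<le>T.
      blinfun_apply (g' k (?p k)) (dx2_traj ?L ?Q (U h) (U v) k, 0)
      + blinfun_apply (g2 k (dx_traj ?L (U v) k, U v k)) (?dx k))"
    unfolding DJ_eq by (rule has_derivative_unique[OF _ has_derivative_cost_gradient_along_traj[OF U f f2 g2]])
  from fun_cong[OF this, of h] have D2J_eq: "blinfun_apply (D2J h) h = (\<Sum>k\<le>T.
      blinfun_apply (g' k (?p k)) (Dx_traj ?L ?Q (U h) k, 0) + blinfun_apply (g2 k (?dx k)) (?dx k))"
    by (simp only: dx2_traj_diag)
  have M_quad_eq: "M_quad (g k (?p k)) (blinfun_apply (g' k (?p k))) (\<lambda>v w. blinfun_apply (g2 k v) w)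
      (dx_traj ?L (U h) k) (U h k)
    = 2 * g k (?p k) + 2 * blinfun_apply (g' k (?p k)) (?dx k) + blinfun_apply (g2 k (?dx k)) (?dx k)"
    if "k \<le> T" for k
    using that by (simp add: M_quad_blinfun has_derivative_bounded_linear[OF g2])
  have "J ubar + blinfun_apply (DJ ubar) h + 1/2 * blinfun_apply (D2J h) h
    = 1/2 * (\<Sum>k\<le>T. 2 * g k (?p k) + 2 * blinfun_apply (g' k (?p k)) (?dx k)
        + blinfun_apply (g2 k (?dx k)) (?dx k) + blinfun_apply (g' k (?p k)) (Dx_traj ?L ?Q (U h) k, 0))"
    unfolding J_def DJ_eq D2J_eq by (simp add: sum.distrib sum_distrib_left algebra_simps)
  also have "\<dots> = ?dynamic"
    by (intro arg_cong[where f = "\<lambda>s. 1/2 * s"] sum.cong refl) (simp add: M_quad_eq)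
  finally show ?thesis .
qed

lemma nash_eq_cong:
  assumes "\<And>n v. n \<in> {1..N} \<Longrightarrow> \<Phi> n v = \<Psi> n v"
  shows "nash_eq N own \<Phi> v \<longleftrightarrow> nash_eq N own \<Psi> v"
  unfolding nash_eq_def using assms by simp

theorem lemma4:
  fixes N T :: nat
    and own :: "'nu::finite \<Rightarrow> nat"
    and tm :: "nat \<Rightarrow> 't::finite"
    and f :: "nat \<Rightarrow> ((real^'nx) \<times> (real^'nu)) \<Rightarrow> real^'nx"
    and x0 :: "real^'nx"
    and c :: "nat \<Rightarrow> nat \<Rightarrow> ((real^'nx) \<times> (real^'nu)) \<Rightarrow> real"
    and ubar :: "real^'nu^'t"
    and f' :: "nat \<Rightarrow> ((real^'nx) \<times> (real^'nu)) \<Rightarrow> ((real^'nx) \<times> (real^'nu)) \<Rightarrow>\<^sub>L (real^'nx)"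
    and f2 :: "nat \<Rightarrow> ((real^'nx) \<times> (real^'nu)) \<Rightarrow> ((real^'nx) \<times> (real^'nu)) \<Rightarrow>\<^sub>L (real^'nx)"
    and c' :: "nat \<Rightarrow> nat \<Rightarrow> ((real^'nx) \<times> (real^'nu)) \<Rightarrow> ((real^'nx) \<times> (real^'nu)) \<Rightarrow>\<^sub>L real"
    and c2 :: "nat \<Rightarrow> nat \<Rightarrow> ((real^'nx) \<times> (real^'nu)) \<Rightarrow> ((real^'nx) \<times> (real^'nu)) \<Rightarrow>\<^sub>L real"
    and DJ :: "nat \<Rightarrow> real^'nu^'t \<Rightarrow> (real^'nu^'t) \<Rightarrow>\<^sub>L real"
    and D2J :: "nat \<Rightarrow> real^'nu^'t \<Rightarrow> (real^'nu^'t) \<Rightarrow>\<^sub>L real"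
  assumes times: "bij_betw tm {..T} (UNIV :: 't set)"
    and owners: "\<forall>i. own i \<in> {1..N}"
    and f_diff: "\<forall>k\<le>T. \<forall>p. (f k has_derivative blinfun_apply (f' k p)) (at p)"
    and f_diff2: "\<forall>k\<le>T. (f' k has_derivative f2 k)
                     (at (traj f x0 (\<lambda>j. ubar $ tm j) k, ubar $ tm k))"
    and c_diff: "\<forall>n\<in>{1..N}. \<forall>k\<le>T. \<forall>p. (c n k has_derivative blinfun_apply (c' n k p)) (at p)"
    and c_diff2: "\<forall>n\<in>{1..N}. \<forall>k\<le>T. (c' n k has_derivative c2 n k)
                     (at (traj f x0 (\<lambda>j. ubar $ tm j) k, ubar $ tm k))"
    and J_diff: "\<forall>n\<in>{1..N}. \<forall>u. (game_cost c f x0 T tm n has_derivative blinfun_apply (DJ n u)) (at u)"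
    and J_diff2: "\<forall>n\<in>{1..N}. (DJ n has_derivative D2J n) (at ubar)"
  shows
    "let pbar = (\<lambda>k. (traj f x0 (\<lambda>j. ubar $ tm j) k, ubar $ tm k));
         static = (\<lambda>n du. game_cost c f x0 T tm n ubar + blinfun_apply (DJ n ubar) du
                     + 1/2 * blinfun_apply (D2J n du) du);
         L = (\<lambda>k. blinfun_apply (f' k (pbar k)));
         Q = (\<lambda>k v w. blinfun_apply (f2 k v) w);
         dynamic = (\<lambda>n du.
            1/2 * (\<Sum>k\<le>T.
               M_quad (c n k (pbar k)) (blinfun_apply (c' n k (pbar k)))
                      (\<lambda>v w. blinfun_apply (c2 n k v) w)
                      (dx_traj L (\<lambda>j. du $ tm j) k) (du $ tm k)
               + blinfun_apply (c' n k (pbar k)) (Dx_traj L Q (\<lambda>j. du $ tm j) k, 0)))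
     in (\<forall>n\<in>{1..N}. \<forall>du. static n du = dynamic n du)
        \<and> (\<forall>du. nash_eq N own static du \<longleftrightarrow> nash_eq N own dynamic du)"
proof -
  let ?u = "\<lambda>w j. w $ tm j"
  have model_eq: "game_cost c f x0 T tm n ubar + blinfun_apply (DJ n ubar) du + 1/2 * blinfun_apply (D2J n du) du
    = 1/2 * (\<Sum>k\<le>T.
        M_quad (c n k (traj_point f x0 (?u ubar) k)) (blinfun_apply (c' n k (traj_point f x0 (?u ubar) k)))
               (\<lambda>v w. blinfun_apply (c2 n k v) w) (dx_traj (traj_jacobian f' f x0 (?u ubar)) (?u du) k) (du $ tm k)
        + blinfun_apply (c' n k (traj_point f x0 (?u ubar) k))
            (Dx_traj (traj_jacobian f' f x0 (?u ubar)) (\<lambda>j v w. blinfun_apply (f2 j v) w) (?u du) k, 0))"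
    if n: "n \<in> {1..N}" for n du
    by (rule cost_taylor_model_eq_M_quad_sum[where U = ?u, OF bounded_linear_vec_nth
          f_diff[rule_format, OF less_imp_le] f_diff2[rule_format, OF less_imp_le]
          c_diff[rule_format, OF n] c_diff2[rule_format, OF n] game_cost_def
          J_diff[rule_format, OF n] J_diff2[rule_format, OF n]])
  show ?thesis
    unfolding Let_def
    by (intro conjI ballI allI nash_eq_cong model_eq)
qed

end
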